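(* Let $p$ be a prime and let $G$ be a finite $p$-group. Let $x\in G$ with $o(x)=p$, and let $\Upsilon$ be the connected component of the cyclic graph $\Delta(G)$ containing $x$. Then $x\sim y$ (i.e. $\langle x,y\rangle$ is cyclic) for every $y\in\Upsilon$ with $y\neq x$.
   Context: For a finite group $G$, the cyclic graph $\Delta(G)$ has vertex set $G^{\#}=G\setminus\{1\}$, and distinct vertices $x,y$ are adjacent (written $x\sim y$) if and only if the subgroup $\langle x,y\rangle$ is cyclic. $o(x)$ denotes the order of $x$. *)

theory Defs
  imports "HOL-Algebra.Algebra"
begin

definition cyc_adj :: "('a, 'b) monoid_scheme \<Rightarrow> 'a \<Rightarrow> 'a \<Rightarrow> bool" where
  "cyc_adj G x y \<longleftrightarrow>
     x \<in> carrier G - {\<one>\<^bsub>G\<^esub>} \<and> y \<in> carrier G - {\<one>\<^bsub>G\<^esub>} \<and> x \<noteq> y \<and>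
     cyclic_group (subgroup_generated G {x, y})"

definition cyc_component :: "('a, 'b) monoid_scheme \<Rightarrow> 'a \<Rightarrow> 'a set" where
  "cyc_component G x = {y. y \<in> carrier G - {\<one>\<^bsub>G\<^esub>} \<and> (cyc_adj G)\<^sup>*\<^sup>* x y}"

end

theory Submission imports Defs begin

text \<open>In a cyclic p-group the elements x with x^p = 1 lie in every nontrivial subgroup
  (they form its unique subgroup of order p). So if x^p = 1 and x lies in the group generated
  by y, then for every neighbour z of y the cyclic p-group generated by y and z contains x,
  hence so does the group generated by z. Along a path of the cyclic graph starting at x, the
  element x thus stays in the group generated by the current vertex y, and then the group
  generated by x and y is the cyclic group generated by y.\<close>

lemma (in group) int_pow_in_generate_if_gcd_ord_dvd:
  assumes g: "g \<in> carrier G" and gcd_dvd: "gcd (int (ord g)) a dvd b"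
  shows "g [^] b \<in> generate G {g [^] a}"
proof -
  obtain q where q: "b = gcd (int (ord g)) a * q" using gcd_dvd by blast
  obtain u v where uv: "u * int (ord g) + v * a = gcd (int (ord g)) a"
    using bezout_int by metis
  have "g [^] b = g [^] (a * (v * q))"
    using g q uv[symmetric] by (simp add: int_pow_eq algebra_simps)
  also have "\<dots> = (g [^] a) [^] (v * q)"
    using g by (simp add: int_pow_pow)
  finally show ?thesis
    using g by (auto simp: generate_pow)
qed

lemma gcd_prime_power_dvd_pred_power:
  fixes a :: int
  assumes p: "Factorial_Ring.prime p" and not_dvd: "\<not> int (p ^ k) dvd a"
  shows "gcd (int (p ^ k)) a dvd int (p ^ (k - 1))"
proof -
  define c where "c = gcd (int (p ^ k)) a"
  have c_int: "int (nat c) = c"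
    by (simp add: c_def)
  have "int (nat c) dvd int (p ^ k)"
    by (simp add: c_int c_def)
  then obtain i where i: "i \<le> k" "nat c = p ^ i"
    using p divides_primepow_nat by (metis int_dvd_int_iff)
  have "i \<noteq> k"
  proof
    assume "i = k"
    then have "c = int (p ^ k)"
      using i c_int by metis
    then show False
      using not_dvd unfolding c_def by (metis gcd_dvd2)
  qed
  then have "int (p ^ i) dvd int (p ^ (k - 1))"
    using i by (simp add: le_imp_power_dvd)
  then show ?thesis
    using i c_int unfolding c_def by metis
qed

lemma (in group) in_generate_of_nontrivial_in_cyclic_p_group:
  assumes g: "g \<in> carrier G" and ord_g: "ord g = p ^ k" and p: "Factorial_Ring.prime p"
    and x: "x \<in> generate G {g}" "x [^] p = \<one>"
    and z: "z \<in> generate G {g}" "z \<noteq> \<one>"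
  shows "x \<in> generate G {z}"
proof -
  obtain b where b: "x = g [^] (b :: int)" using x(1) g by (auto simp: generate_pow)
  obtain a where a: "z = g [^] (a :: int)" using z(1) g by (auto simp: generate_pow)
  have ord_dvd_bp: "int (p ^ k) dvd b * int p"
    using x(2) g b ord_g by (simp flip: int_pow_int add: int_pow_pow int_pow_eq_id)
  have not_dvd_a: "\<not> int (p ^ k) dvd a"
    using z(2) g a ord_g int_pow_eq_id by simp
  have "k \<noteq> 0"
    using not_dvd_a by (metis one_dvd power_0 of_nat_1)
  then have "int (p ^ (k - 1)) * int p dvd b * int p"
    using ord_dvd_bp by (metis of_nat_mult power_minus_mult neq0_conv)
  then have "int (p ^ (k - 1)) dvd b"
    using p by (simp add: prime_gt_0_nat)
  then have "gcd (int (ord g)) a dvd b"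
    using gcd_prime_power_dvd_pred_power[OF p not_dvd_a] ord_g dvd_trans by metis
  then show ?thesis
    using int_pow_in_generate_if_gcd_ord_dvd[OF g] a b by simp
qed

lemma (in group) in_generate_of_cyc_adj:
  assumes order: "order G = p ^ n" and p: "Factorial_Ring.prime p"
    and x: "x \<in> generate G {y}" "x [^] p = \<one>"
    and adj: "cyc_adj G y z"
  shows "x \<in> generate G {z}"
proof -
  have y: "y \<in> carrier G" and z: "z \<in> carrier G" "z \<noteq> \<one>"
    using adj by (auto simp: cyc_adj_def)
  let ?H = "subgroup_generated G {y, z}"
  have gen_yz: "carrier ?H = generate G {y, z}"
    using y z by (simp add: carrier_subgroup_generated Int_absorb1)
  have "cyclic_group ?H"
    using adj by (simp add: cyc_adj_def)
  then obtain g where g_H: "g \<in> carrier ?H"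
    and gen_H: "carrier ?H = range (\<lambda>n::int. g [^]\<^bsub>?H\<^esub> n)"
    using group.cyclic_group[OF group_subgroup_generated] by blast
  have yz_range: "generate G {y, z} = range (\<lambda>n::int. g [^] n)"
    using gen_H unfolding gen_yz int_pow_subgroup_generated[OF g_H] .
  have g: "g \<in> carrier G"
    using g_H carrier_subgroup_generated_subset by blast
  then have gen_yz_eq: "generate G {y, z} = generate G {g}"
    using yz_range by (auto simp: generate_pow)
  have "ord g dvd p ^ n"
    using ord_dvd_group_order[OF g] order by simp
  then obtain k where ord_g: "ord g = p ^ k"
    using p divides_primepow_nat by blast
  have x_in: "x \<in> generate G {g}"
    using x(1) mono_generate[of "{y}" "{y, z}"] gen_yz_eq by blast
  have z_in: "z \<in> generate G {g}"
    using generate.incl[of z "{y, z}"] gen_yz_eq by blast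
  show ?thesis
    using in_generate_of_nontrivial_in_cyclic_p_group[OF g ord_g p x_in x(2) z_in z(2)] .
qed

lemma (in group) in_generate_along_cyc_path:
  assumes order: "order G = p ^ n" and p: "Factorial_Ring.prime p"
    and x: "x [^] p = \<one>"
    and path: "(cyc_adj G)\<^sup>*\<^sup>* x y"
  shows "x \<in> generate G {y}"
  using path
proof induction
  case base
  show ?case using generate.incl[of x "{x}"] by blast
next
  case (step y z)
  then show ?case using in_generate_of_cyc_adj[OF order p _ x] by blast
qed

lemma (in group) cyclic_group_subgroup_generated_insert:
  assumes y: "y \<in> carrier G" and x: "x \<in> generate G {y}"
  shows "cyclic_group (subgroup_generated G {x, y})"
proof -
  have "generate G {x, y} = generate G {y}"
  proof
    show "generate G {x, y} \<subseteq> generate G {y}"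
      using x y generate_is_subgroup[of "{y}"]
      by (intro generate_subgroup_incl) (auto intro: generate.incl)
    show "generate G {y} \<subseteq> generate G {x, y}"
      by (intro mono_generate) auto
  qed
  then have "subgroup_generated G {x, y} = subgroup_generated G {y}"
    using x y generate_in_carrier[of "{y}"]
    by (simp add: subgroup_generated_def insert_absorb Int_absorb1)
  then show ?thesis
    using cyclic_group_generated by simp
qed

theorem lemma2p2:
  fixes G (structure) and p :: nat and x :: 'a
  assumes "group G" and "finite (carrier G)" and "Factorial_Ring.prime p"
    and "\<exists>n. order G = p ^ n"
    and "x \<in> carrier G" and "group.ord G x = p"
  shows "\<forall>y \<in> cyc_component G x. y \<noteq> x \<longrightarrow> cyc_adj G x y"
proof (intro ballI impI)
  interpret group G by fact
  fix y assume y: "y \<in> cyc_component G x" "y \<noteq> x"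
  obtain n where order: "order G = p ^ n" using assms(4) by blast
  have x_pow_p: "x [^] p = \<one>"
    using assms(5,6) pow_ord_eq_1 by metis
  have x_nontriv: "x \<noteq> \<one>"
    using assms(3,6) by (metis ord_id not_prime_1)
  have y_carrier: "y \<in> carrier G - {\<one>}" and path: "(cyc_adj G)\<^sup>*\<^sup>* x y"
    using y(1) by (auto simp: cyc_component_def)
  have "x \<in> generate G {y}"
    using in_generate_along_cyc_path[OF order assms(3) x_pow_p path] .
  then have "cyclic_group (subgroup_generated G {x, y})"
    using y_carrier cyclic_group_subgroup_generated_insert by blast
  then show "cyc_adj G x y"
    using assms(5) x_nontriv y_carrier y(2) by (auto simp: cyc_adj_def)
qed

end
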